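(* Let $p \geq 1$ and $a \geq 0$ be integers, and let $a_{\max}(p) = \lfloor \frac{p^2}{4} \rfloor$. Then: (i) If $a < p-1$, then $H_c(p,a) = 0$. (ii) If $a > a_{\max}(p)$, then $H(p,a) = 0$. Moreover, $$H(p, a_{\max}(p)) = \begin{cases} p, & \text{if } p \text{ is odd},\\ \frac{p}{2}, & \text{if } p \text{ is even}.\end{cases}$$ (iii) If $a_{\max}(p-1) < a \leq a_{\max}(p)$, then $H(p,a) = H_c(p,a)$.
   Context: For a finite poset, the Hasse diagram is the directed graph on its points whose arcs are the covering pairs $x \to y$ ($x < y$ with no $w$ satisfying $x < w < y$). Posets are counted up to isomorphism (unlabeled). $H(p,a)$ denotes the number of isomorphism classes of posets with $p$ points whose Hasse diagram has exactly $a$ arcs, and $H_c(p,a)$ denotes the number of those that are connected (i.e., whose Hasse diagram, viewed as an undirected graph, is connected). *)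

theory Defs
  imports Main
begin

definition is_poset :: "nat \<Rightarrow> (nat \<times> nat) set \<Rightarrow> bool" where
  "is_poset p R \<longleftrightarrow> R \<subseteq> {..<p} \<times> {..<p}
     \<and> (\<forall>x\<in>{..<p}. (x, x) \<in> R)
     \<and> (\<forall>x y. (x, y) \<in> R \<and> (y, x) \<in> R \<longrightarrow> x = y)
     \<and> (\<forall>x y z. (x, y) \<in> R \<and> (y, z) \<in> R \<longrightarrow> (x, z) \<in> R)"

definition hasse_arcs :: "(nat \<times> nat) set \<Rightarrow> (nat \<times> nat) set" where
  "hasse_arcs R = {(x, y). (x, y) \<in> R \<and> x \<noteq> y \<and>
      \<not> (\<exists>w. (x, w) \<in> R \<and> x \<noteq> w \<and> (w, y) \<in> R \<and> w \<noteq> y)}"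

definition hasse_connected :: "nat \<Rightarrow> (nat \<times> nat) set \<Rightarrow> bool" where
  "hasse_connected p R \<longleftrightarrow>
     (\<forall>x\<in>{..<p}. \<forall>y\<in>{..<p}. (x, y) \<in> (hasse_arcs R \<union> (hasse_arcs R)\<inverse>)\<^sup>*)"

definition poset_iso :: "nat \<Rightarrow> (nat \<times> nat) set \<Rightarrow> (nat \<times> nat) set \<Rightarrow> bool" where
  "poset_iso p R S \<longleftrightarrow> (\<exists>f. bij_betw f {..<p} {..<p} \<and>
     (\<forall>x\<in>{..<p}. \<forall>y\<in>{..<p}. (x, y) \<in> R \<longleftrightarrow> (f x, f y) \<in> S))"

definition num_iso_classes :: "nat \<Rightarrow> (nat \<times> nat) set set \<Rightarrow> nat" where
  "num_iso_classes p A = card (A // {(R, S). R \<in> A \<and> S \<in> A \<and> poset_iso p R S})"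

definition H :: "nat \<Rightarrow> nat \<Rightarrow> nat" where
  "H p a = num_iso_classes p {R. is_poset p R \<and> card (hasse_arcs R) = a}"

definition Hc :: "nat \<Rightarrow> nat \<Rightarrow> nat" where
  "Hc p a = num_iso_classes p
     {R. is_poset p R \<and> card (hasse_arcs R) = a \<and> hasse_connected p R}"

definition a_max :: "nat \<Rightarrow> nat" where
  "a_max p = p\<^sup>2 div 4"

end

theory Submission
  imports Defs
begin

text \<open>The undirected Hasse diagram of a poset is triangle-free: of three pairwise comparable
  points, the outer two never form a cover. Mantel's theorem therefore gives at most
  \<lfloor>p^2/4\<rfloor> arcs, and a disconnected poset, being triangle-free on two nonempty
  parts of sizes k + l = p, has at most \<lfloor>k^2/4\<rfloor> + \<lfloor>l^2/4\<rfloor> \<le> \<lfloor>(p-1)^2/4\<rfloor>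
  arcs, while a connected one needs p - 1 arcs for a spanning tree.
  In the extremal case the Hasse graph is complete bipartite, so there is no chain of three
  covers: the minimal points, the maximal non-minimal points and the remaining points form
  three levels, and every point lies below every point of a higher level. Such a poset is
  determined up to isomorphism by its numbers c0 and c2 of minimal and maximal elements, and
  counting the admissible pairs (c0, c2) gives p for odd p and p/2 for even p.\<close>

section \<open>Covers and the Hasse graph\<close>

lemma is_poset_subset: "is_poset p R \<Longrightarrow> R \<subseteq> {..<p} \<times> {..<p}"
  by (simp add: is_poset_def)

lemma is_poset_refl: "is_poset p R \<Longrightarrow> x < p \<Longrightarrow> (x, x) \<in> R"
  by (simp add: is_poset_def)

lemma is_poset_antisym: "is_poset p R \<Longrightarrow> (x, y) \<in> R \<Longrightarrow> (y, x) \<in> R \<Longrightarrow> x = y"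
  unfolding is_poset_def by blast

lemma is_poset_trans: "is_poset p R \<Longrightarrow> (x, y) \<in> R \<Longrightarrow> (y, z) \<in> R \<Longrightarrow> (x, z) \<in> R"
  unfolding is_poset_def by blast

lemma is_poset_converse: "is_poset p R \<Longrightarrow> is_poset p (R\<inverse>)"
  unfolding is_poset_def by blast

lemma hasse_arcsD: "(x, y) \<in> hasse_arcs R \<Longrightarrow> (x, y) \<in> R \<and> x \<noteq> y"
  by (simp add: hasse_arcs_def)

lemma hasse_arcs_no_between:
  "(x, y) \<in> hasse_arcs R \<Longrightarrow> (x, w) \<in> R \<Longrightarrow> (w, y) \<in> R \<Longrightarrow> w = x \<or> w = y"
  by (auto simp add: hasse_arcs_def)

lemma hasse_arcs_converse: "hasse_arcs (R\<inverse>) = (hasse_arcs R)\<inverse>"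
  unfolding hasse_arcs_def by blast

lemma hasse_arcs_subset: "is_poset p R \<Longrightarrow> hasse_arcs R \<subseteq> {..<p} \<times> {..<p}"
  using is_poset_subset hasse_arcsD by fastforce

lemma finite_hasse_arcs: "is_poset p R \<Longrightarrow> finite (hasse_arcs R)"
  using hasse_arcs_subset finite_subset by blast

lemma poset_has_minimal:
  assumes R: "is_poset p R" and A: "A \<subseteq> {..<p}" "a \<in> A"
  obtains z where "z \<in> A" "\<And>w. w \<in> A \<Longrightarrow> (w, z) \<in> R \<Longrightarrow> w = z"
proof -
  define below where "below z = card {w. (w, z) \<in> R}" for z
  obtain z where z: "z \<in> A" and least: "\<And>u. u \<in> A \<Longrightarrow> below z \<le> below u"
    using ex_has_least_nat[of "\<lambda>z. z \<in> A" a below] A(2) by blast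
  have "w = z" if w: "w \<in> A" "(w, z) \<in> R" for w
  proof (rule ccontr)
    assume "w \<noteq> z"
    have "finite {u. (u, z) \<in> R}"
      by (rule finite_subset[of _ "{..<p}"]) (use is_poset_subset[OF R] in auto)
    moreover have "{u. (u, w) \<in> R} \<subset> {u. (u, z) \<in> R}"
    proof
      show "{u. (u, w) \<in> R} \<subseteq> {u. (u, z) \<in> R}" using is_poset_trans[OF R _ w(2)] by blast
      have "(z, w) \<notin> R" using is_poset_antisym[OF R w(2)] \<open>w \<noteq> z\<close> by blast
      moreover have "(z, z) \<in> R" using is_poset_refl[OF R] z A(1) by blast
      ultimately show "{u. (u, w) \<in> R} \<noteq> {u. (u, z) \<in> R}" by blast
    qed
    ultimately have "below w < below z"
      unfolding below_def by (rule psubset_card_mono)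
    then show False using least[OF w(1)] by simp
  qed
  then show thesis using that z by blast
qed

lemma exists_cover_above:
  assumes R: "is_poset p R" and "(x, y) \<in> R" "x \<noteq> y"
  obtains z where "(x, z) \<in> hasse_arcs R" "(z, y) \<in> R"
proof -
  let ?I = "{z. (x, z) \<in> R \<and> x \<noteq> z \<and> (z, y) \<in> R}"
  have I_subset: "?I \<subseteq> {..<p}" using is_poset_subset[OF R] by auto
  have "y \<in> ?I" using assms(2,3) is_poset_refl[OF R] is_poset_subset[OF R] by auto
  then obtain z where z: "z \<in> ?I" and min: "\<And>w. w \<in> ?I \<Longrightarrow> (w, z) \<in> R \<Longrightarrow> w = z"
    using poset_has_minimal[OF R I_subset] by blast
  have "w = z" if "(x, w) \<in> R" "x \<noteq> w" "(w, z) \<in> R" for w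
  proof (rule min)
    show "w \<in> ?I" using that z is_poset_trans[OF R \<open>(w, z) \<in> R\<close>] by blast
  qed fact
  then have "(x, z) \<in> hasse_arcs R" using z unfolding hasse_arcs_def by blast
  then show thesis using that z by blast
qed

lemma exists_cover_below:
  assumes R: "is_poset p R" and "(x, y) \<in> R" "x \<noteq> y"
  obtains z where "(x, z) \<in> R" "(z, y) \<in> hasse_arcs R"
  using exists_cover_above[OF is_poset_converse[OF R], of y x] assms(2,3)
  by (auto simp add: hasse_arcs_converse)

definition hasse_graph :: "(nat \<times> nat) set \<Rightarrow> (nat \<times> nat) set" where
  "hasse_graph R = hasse_arcs R \<union> (hasse_arcs R)\<inverse>"

lemma sym_hasse_graph: "sym (hasse_graph R)"
  unfolding hasse_graph_def sym_def by blast

lemma hasse_graph_subset: "is_poset p R \<Longrightarrow> hasse_graph R \<subseteq> {..<p} \<times> {..<p}"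
  unfolding hasse_graph_def using hasse_arcs_subset by fastforce

lemma card_hasse_graph:
  assumes R: "is_poset p R"
  shows "card (hasse_graph R) = 2 * card (hasse_arcs R)"
proof -
  have disjoint: "hasse_arcs R \<inter> (hasse_arcs R)\<inverse> = {}"
    using is_poset_antisym[OF R] hasse_arcsD by blast
  show ?thesis
    unfolding hasse_graph_def
    using card_Un_disjoint[OF finite_hasse_arcs[OF R] _ disjoint] finite_hasse_arcs[OF R] by simp
qed

text \<open>Taking x = y = z shows that a triangle-free relation is irreflexive.\<close>

definition triangle_free :: "('a \<times> 'a) set \<Rightarrow> bool" where
  "triangle_free E \<longleftrightarrow> (\<forall>x y z. (x, y) \<in> E \<longrightarrow> (y, z) \<in> E \<longrightarrow> (x, z) \<notin> E)"

lemma triangle_free_hasse_graph: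
  assumes R: "is_poset p R"
  shows "triangle_free (hasse_graph R)"
proof -
  have False if ab: "(a, b) \<in> hasse_arcs R" and bc: "(b, c) \<in> hasse_arcs R"
    and ac: "(a, c) \<in> hasse_arcs R \<or> (c, a) \<in> hasse_arcs R" for a b c
  proof -
    have "(a, b) \<in> R" "a \<noteq> b" "(b, c) \<in> R" "b \<noteq> c"
      using hasse_arcsD[OF ab] hasse_arcsD[OF bc] by auto
    moreover have "(a, c) \<in> R" using is_poset_trans[OF R] calculation by blast
    ultimately show False
      using ac hasse_arcs_no_between[of a c R b] hasse_arcsD[of c a R] is_poset_antisym[OF R]
      by blast
  qed
  then show ?thesis unfolding triangle_free_def hasse_graph_def by blast
qed

section \<open>Mantel's theorem\<close>

lemma mult_le_a_max: "k * l \<le> a_max (k + l)"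
proof -
  have "int (4 * (k * l)) \<le> int ((k + l)^2)"
    using zero_le_power2[of "int k - int l"] by (simp add: power2_eq_square algebra_simps)
  then have "4 * (k * l) div 4 \<le> (k + l)^2 div 4"
    by (intro div_le_mono) linarith
  then show ?thesis unfolding a_max_def by simp
qed

lemma card_Int_Times_eq_sum:
  assumes "finite A" "finite B"
  shows "card (E \<inter> A \<times> B) = (\<Sum>a\<in>A. card (E `` {a} \<inter> B))"
proof -
  have "E \<inter> A \<times> B = (SIGMA a:A. E `` {a} \<inter> B)" by auto
  then show ?thesis using assms by (simp add: le_antisym)
qed

lemma sym_card_Int_Times_commute:
  assumes "sym E"
  shows "card (E \<inter> A \<times> B) = card (E \<inter> B \<times> A)"
proof -
  have "(E \<inter> A \<times> B)\<inverse> = E \<inter> B \<times> A"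
    using assms unfolding sym_def by blast
  then show ?thesis by (metis card_inverse)
qed

lemma sum_eq_card_mult_bound:
  fixes f :: "'a \<Rightarrow> nat"
  assumes "finite A" "\<And>x. x \<in> A \<Longrightarrow> f x \<le> c" "sum f A = card A * c" "x \<in> A"
  shows "f x = c"
proof -
  have "(\<Sum>x\<in>A. c - f x) = 0"
    using sum_subtractf_nat[of A f "\<lambda>_. c"] assms(2,3) by simp
  then show ?thesis using assms by (simp add: le_antisym)
qed

lemma triangle_free_card_eq_sum_outside_nbhd:
  fixes E :: "('a \<times> 'a) set" and v :: 'a
  assumes fin: "finite U" and sub: "E \<subseteq> U \<times> U" and sym: "sym E" and tf: "triangle_free E"
  defines "N \<equiv> E `` {v}" and "W \<equiv> U - E `` {v}"
  shows "card E = (\<Sum>w\<in>W. card (E `` {w})) + (\<Sum>w\<in>W. card (E `` {w} \<inter> N))"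
proof -
  have nbhd_sub: "E `` {x} \<subseteq> U" for x using sub by blast
  have N_sub: "N \<subseteq> U" using nbhd_sub unfolding N_def .
  have W_eq: "W = U - N" unfolding W_def N_def ..
  have fin_N: "finite N" using finite_subset[OF N_sub fin] .
  have fin_W: "finite W" using fin unfolding W_eq by simp
  have fin_E: "finite E" using finite_subset[OF sub] fin by simp
  have indep: "E \<inter> N \<times> N = {}"
    using tf unfolding triangle_free_def N_def by blast
  have "E = (E \<inter> W \<times> U) \<union> (E \<inter> N \<times> U)" using sub N_sub unfolding W_eq by blast
  moreover have "(E \<inter> W \<times> U) \<inter> (E \<inter> N \<times> U) = {}" unfolding W_eq by blast
  ultimately have "card E = card (E \<inter> W \<times> U) + card (E \<inter> N \<times> U)"
    using fin_E by (metis card_Un_disjoint finite_Int)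
  also have "E \<inter> N \<times> U = E \<inter> N \<times> W" using indep sub unfolding W_eq by blast
  also have "card (E \<inter> N \<times> W) = card (E \<inter> W \<times> N)"
    using sym by (rule sym_card_Int_Times_commute)
  also have "card (E \<inter> W \<times> U) = (\<Sum>w\<in>W. card (E `` {w}))"
    using card_Int_Times_eq_sum[OF fin_W fin] nbhd_sub by (simp add: Int_absorb2)
  also have "card (E \<inter> W \<times> N) = (\<Sum>w\<in>W. card (E `` {w} \<inter> N))"
    using card_Int_Times_eq_sum[OF fin_W fin_N] .
  finally show ?thesis .
qed

text \<open>Mantel's theorem via a vertex v of maximum degree: its neighbourhood N is independent,
  so every edge meets W = U - N, and each vertex of W has at most deg v = card N neighbours.\<close>

lemma triangle_free_bipartite_bound:
  fixes E :: "('a \<times> 'a) set"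
  assumes fin: "finite U" and sub: "E \<subseteq> U \<times> U" and sym: "sym E"
    and tf: "triangle_free E" and ne: "U \<noteq> {}"
  obtains W N where "W \<inter> N = {}" "W \<union> N = U" "card E \<le> 2 * (card W * card N)"
    "card E = 2 * (card W * card N) \<Longrightarrow> E = W \<times> N \<union> N \<times> W"
proof -
  have nbhd_sub: "E `` {x} \<subseteq> U" for x using sub by blast
  have "card (E `` {x}) < Suc (card U)" for x
    using card_mono[OF fin nbhd_sub] by (simp add: less_Suc_eq_le)
  then obtain v where "v \<in> U"
    and max_deg: "\<And>x. x \<in> U \<Longrightarrow> card (E `` {x}) \<le> card (E `` {v})"
    using ex_has_greatest_nat[of "\<lambda>x. x \<in> U" _ "\<lambda>x. card (E `` {x})"] ne by blast
  define N where "N = E `` {v}"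
  define W where "W = U - N"
  have N_sub: "N \<subseteq> U" using nbhd_sub unfolding N_def .
  have fin_N: "finite N" and fin_W: "finite W"
    using finite_subset[OF N_sub fin] fin unfolding W_def by auto
  have deg_W: "card (E `` {w}) \<le> card N" if "w \<in> W" for w
    using max_deg that unfolding W_def N_def by blast
  have deg_W_N: "card (E `` {w} \<inter> N) \<le> card N" if "w \<in> W" for w
    using card_mono[OF fin_N] by simp
  have card_E: "card E = (\<Sum>w\<in>W. card (E `` {w})) + (\<Sum>w\<in>W. card (E `` {w} \<inter> N))"
    using triangle_free_card_eq_sum_outside_nbhd[OF fin sub sym tf] unfolding W_def N_def .
  have sum_deg: "(\<Sum>w\<in>W. card (E `` {w})) \<le> card W * card N"
    using sum_bounded_above[of W, OF deg_W] by simp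
  have sum_cross: "(\<Sum>w\<in>W. card (E `` {w} \<inter> N)) \<le> card W * card N"
    using sum_bounded_above[of W, OF deg_W_N] by simp
  have bipartite: "E = W \<times> N \<union> N \<times> W" if eq: "card E = 2 * (card W * card N)"
  proof -
    have "(\<Sum>w\<in>W. card (E `` {w})) = card W * card N"
      and "(\<Sum>w\<in>W. card (E `` {w} \<inter> N)) = card W * card N"
      using card_E sum_deg sum_cross eq by linarith+
    then have card_eq: "card (E `` {w}) = card N" "card (E `` {w} \<inter> N) = card N"
      if "w \<in> W" for w
      using sum_eq_card_mult_bound[of W "\<lambda>w. card (E `` {w})" "card N" w]
        sum_eq_card_mult_bound[of W "\<lambda>w. card (E `` {w} \<inter> N)" "card N" w]
        fin_W deg_W deg_W_N that by simp_all
    have nbhd_W: "E `` {w} = N" if "w \<in> W" for w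
    proof -
      have "E `` {w} \<inter> N = N" using card_subset_eq[OF fin_N _ card_eq(2)[OF that]] by blast
      then show ?thesis
        using card_subset_eq[OF finite_subset[OF nbhd_sub fin] _ card_eq(1)[OF that, symmetric]]
        by blast
    qed
    have "E \<inter> N \<times> N = {}" using tf unfolding triangle_free_def N_def by blast
    then have "E \<subseteq> W \<times> N \<union> N \<times> W" using nbhd_W sub unfolding W_def by blast
    moreover have "W \<times> N \<union> N \<times> W \<subseteq> E" using nbhd_W sym unfolding sym_def by blast
    ultimately show ?thesis by blast
  qed
  show thesis
  proof
    show "W \<inter> N = {}" "W \<union> N = U" unfolding W_def using N_sub by auto
  qed (use card_E sum_deg sum_cross bipartite in linarith)+
qed

lemma mantel:
  fixes E :: "('a \<times> 'a) set"
  assumes "finite U" "E \<subseteq> U \<times> U" "sym E" "triangle_free E"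
  shows "card E \<le> 2 * a_max (card U)"
proof (cases "U = {}")
  case False
  then obtain W N where "W \<inter> N = {}" "W \<union> N = U" "card E \<le> 2 * (card W * card N)"
    using triangle_free_bipartite_bound[OF assms] by metis
  moreover have "card U = card W + card N"
    using calculation(1,2) assms(1) by (metis card_Un_disjoint finite_Un)
  ultimately show ?thesis using mult_le_a_max[of "card W" "card N"] by simp
qed (use assms(2) in simp)

lemma mantel_extremal:
  fixes E :: "('a \<times> 'a) set"
  assumes "finite U" "E \<subseteq> U \<times> U" "sym E" "triangle_free E"
    and extremal: "card E = 2 * a_max (card U)"
  obtains P Q where "P \<inter> Q = {}" "P \<union> Q = U" "E = P \<times> Q \<union> Q \<times> P"
proof (cases "U = {}")
  case True
  then show thesis using that assms(2) by auto
next
  case False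
  then obtain W N where WN: "W \<inter> N = {}" "W \<union> N = U" "card E \<le> 2 * (card W * card N)"
    and bip: "card E = 2 * (card W * card N) \<Longrightarrow> E = W \<times> N \<union> N \<times> W"
    using triangle_free_bipartite_bound[OF assms(1-4)] by metis
  have "card U = card W + card N"
    using WN(1,2) assms(1) by (metis card_Un_disjoint finite_Un)
  then have "card E = 2 * (card W * card N)"
    using WN(3) extremal mult_le_a_max[of "card W" "card N"] by simp
  then show thesis using that WN bip by blast
qed

section \<open>Bounds on the number of arcs\<close>

lemma card_le_if_connected:
  fixes A :: "('a \<times> 'a) set"
  assumes fin: "finite A" and conn: "\<And>v. v \<in> V \<Longrightarrow> (v, r) \<in> (A \<union> A\<inverse>)\<^sup>*"
  shows "card (V - {r}) \<le> card A"
proof -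
  define E where "E = A \<union> A\<inverse>"
  define dist where "dist v = (LEAST n. (v, r) \<in> E ^^ n)" for v
  have dist_path: "(v, r) \<in> E ^^ dist v" if "(v, r) \<in> E ^^ n" for v n
    unfolding dist_def using that by (rule LeastI)
  have dist_le: "dist v \<le> n" if "(v, r) \<in> E ^^ n" for v n
    unfolding dist_def using that by (rule Least_le)
  have "\<exists>u. (v, u) \<in> E \<and> Suc (dist u) = dist v" if v: "v \<in> V - {r}" for v
  proof -
    obtain n where "(v, r) \<in> E ^^ n" using conn v rtrancl_power unfolding E_def by blast
    then have path: "(v, r) \<in> E ^^ dist v" by (rule dist_path)
    then obtain m where m: "dist v = Suc m" using v by (cases "dist v") auto
    then obtain u where u: "(v, u) \<in> E" "(u, r) \<in> E ^^ m" using path by (metis relpow_Suc_D2)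
    have "(v, r) \<in> E ^^ Suc (dist u)"
      using relpow_Suc_I2[OF u(1) dist_path[OF u(2)]] .
    then have "dist v \<le> Suc (dist u)" by (rule dist_le)
    then show ?thesis using u dist_le[OF u(2)] m by (intro exI[of _ u]) simp
  qed
  then obtain parent where parent: "\<And>v. v \<in> V - {r} \<Longrightarrow>
      (v, parent v) \<in> E \<and> Suc (dist (parent v)) = dist v"
    by metis
  define arc where "arc v = (if (v, parent v) \<in> A then (v, parent v) else (parent v, v))" for v
  have "arc ` (V - {r}) \<subseteq> A" using parent unfolding arc_def E_def by auto
  moreover have "inj_on arc (V - {r})"
  proof (rule inj_onI)
    fix x y assume "x \<in> V - {r}" "y \<in> V - {r}" "arc x = arc y"
    then show "x = y" using parent[of x] parent[of y] unfolding arc_def by (auto split: if_splits)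
  qed
  ultimately show ?thesis using card_inj_on_le fin by blast
qed

lemma card_hasse_arcs_ge_if_connected:
  assumes R: "is_poset p R" and conn: "hasse_connected p R"
  shows "p - 1 \<le> card (hasse_arcs R)"
proof (cases "p = 0")
  case False
  have "card ({..<p} - {0}) \<le> card (hasse_arcs R)"
    using card_le_if_connected[OF finite_hasse_arcs[OF R]] conn False
    unfolding hasse_connected_def by blast
  then show ?thesis using False by simp
qed simp

lemma card_hasse_arcs_le_a_max:
  assumes R: "is_poset p R"
  shows "card (hasse_arcs R) \<le> a_max p"
  using mantel[OF _ hasse_graph_subset[OF R] sym_hasse_graph triangle_free_hasse_graph[OF R]]
    card_hasse_graph[OF R] by simp

lemma a_max_add_le:
  assumes "1 \<le> k" "1 \<le> l"
  shows "a_max k + a_max l \<le> a_max (k + l - 1)"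
proof (cases "k = 1 \<or> l = 1")
  case True
  then show ?thesis by (auto simp add: a_max_def)
next
  case False
  then obtain i j where ij: "k = i + 2" "l = j + 2" using assms
    by (metis add.commute add_2_eq_Suc' le_Suc_ex le_antisym not_less_eq_eq one_add_one
        plus_1_eq_Suc)
  have "4 * (a_max k + a_max l) \<le> k^2 + l^2"
    unfolding a_max_def by (metis add_mono distrib_left mult.commute div_times_less_eq_dividend)
  also have "\<dots> \<le> (k + l - 1)^2"
    unfolding ij by (simp add: power2_eq_square algebra_simps)
  finally have "4 * (a_max k + a_max l) div 4 \<le> (k + l - 1)^2 div 4" by (rule div_le_mono)
  then show ?thesis unfolding a_max_def by simp
qed

lemma triangle_free_subset: "triangle_free E \<Longrightarrow> F \<subseteq> E \<Longrightarrow> triangle_free F"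
  unfolding triangle_free_def by blast

lemma mantel_disconnected:
  fixes E :: "('a \<times> 'a) set"
  assumes "finite V" "C \<inter> D = {}" "C \<union> D = V" "C \<noteq> {}" "D \<noteq> {}"
    and "E \<subseteq> C \<times> C \<union> D \<times> D" "sym E" "triangle_free E"
  shows "card E \<le> 2 * a_max (card V - 1)"
proof -
  have fin: "finite C" "finite D" using assms(1,3) by auto
  have part_bound: "card (E \<inter> S \<times> S) \<le> 2 * a_max (card S)" if "finite S" for S
    using mantel[OF that, of "E \<inter> S \<times> S"] triangle_free_subset[OF assms(8)] assms(7)
    unfolding sym_def by blast
  have "E = (E \<inter> C \<times> C) \<union> (E \<inter> D \<times> D)" using assms(6) by blast
  moreover have "(E \<inter> C \<times> C) \<inter> (E \<inter> D \<times> D) = {}" using assms(2) by blast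
  ultimately have "card E = card (E \<inter> C \<times> C) + card (E \<inter> D \<times> D)"
    using fin by (metis card_Un_disjoint finite_Int finite_SigmaI inf_commute)
  also have "\<dots> \<le> 2 * (a_max (card C) + a_max (card D))"
    using part_bound fin by (simp add: add_mono)
  also have "\<dots> \<le> 2 * a_max (card C + card D - 1)"
    using a_max_add_le[of "card C" "card D"] assms(4,5) fin by (simp add: Suc_leI card_gt_0_iff)
  also have "card C + card D = card V" using assms(2,3) fin by (metis card_Un_disjoint)
  finally show ?thesis .
qed

lemma card_hasse_arcs_le_if_disconnected:
  assumes R: "is_poset p R" and disconn: "\<not> hasse_connected p R"
  shows "card (hasse_arcs R) \<le> a_max (p - 1)"
proof -
  define G where "G = hasse_graph R"
  obtain x y where xy: "x < p" "y < p" "(x, y) \<notin> G\<^sup>*"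
    using disconn unfolding hasse_connected_def G_def hasse_graph_def by auto
  define C where "C = {z. z < p \<and> (x, z) \<in> G\<^sup>*}"
  define D where "D = {..<p} - C"
  have "G \<subseteq> C \<times> C \<union> D \<times> D"
    using hasse_graph_subset[OF R] sym_hasse_graph[of R] unfolding C_def D_def G_def sym_def
    by (auto intro: rtrancl_into_rtrancl)
  moreover have "x \<in> C" "y \<in> D" using xy unfolding C_def D_def by auto
  ultimately have "card G \<le> 2 * a_max (card {..<p} - 1)"
    using mantel_disconnected[of "{..<p}" C D G] sym_hasse_graph triangle_free_hasse_graph[OF R]
    unfolding C_def D_def G_def by blast
  then show ?thesis using card_hasse_graph[OF R] unfolding G_def by simp
qed

definition minimals :: "nat \<Rightarrow> (nat \<times> nat) set \<Rightarrow> nat set" where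
  "minimals p R = {x. x < p \<and> (\<forall>y. (y, x) \<in> R \<longrightarrow> y = x)}"

definition maximals :: "nat \<Rightarrow> (nat \<times> nat) set \<Rightarrow> nat set" where
  "maximals p R = minimals p (R\<inverse>)"

lemma maximals_iff: "x \<in> maximals p R \<longleftrightarrow> x < p \<and> (\<forall>y. (x, y) \<in> R \<longrightarrow> y = x)"
  unfolding maximals_def minimals_def by blast

lemma minimals_nonempty:
  assumes R: "is_poset p R" and "0 < p"
  shows "minimals p R \<noteq> {}"
proof -
  obtain z where "z \<in> {..<p}" "\<And>w. w \<in> {..<p} \<Longrightarrow> (w, z) \<in> R \<Longrightarrow> w = z"
    using poset_has_minimal[OF R order_refl, of 0] assms(2) by blast
  then have "z \<in> minimals p R" using is_poset_subset[OF R] unfolding minimals_def by blast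
  then show ?thesis by blast
qed

definition layered_order :: "nat \<Rightarrow> (nat \<Rightarrow> nat) \<Rightarrow> (nat \<times> nat) set" where
  "layered_order p lev = {(x, y). x < p \<and> y < p \<and> (x = y \<or> lev x < lev y)}"

definition layer :: "nat \<Rightarrow> (nat \<Rightarrow> nat) \<Rightarrow> nat \<Rightarrow> nat set" where
  "layer p lev k = {x. x < p \<and> lev x = k}"

lemma is_poset_layered_order: "is_poset p (layered_order p lev)"
  unfolding is_poset_def layered_order_def by auto

lemma minimals_layered_order:
  "minimals p (layered_order p lev) = {x. x < p \<and> (\<forall>y<p. lev x \<le> lev y)}"
  unfolding minimals_def layered_order_def by force

lemma maximals_layered_order:
  "maximals p (layered_order p lev) = {x. x < p \<and> (\<forall>y<p. lev y \<le> lev x)}"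
  unfolding maximals_def minimals_def layered_order_def by force

lemma finite_layer: "finite (layer p lev k)"
  unfolding layer_def by simp

lemma card_layers:
  assumes "\<forall>x<p. lev x \<le> 2"
  shows "card (layer p lev 0) + card (layer p lev 1) + card (layer p lev 2) = p"
proof -
  have "{..<p} = (layer p lev 0 \<union> layer p lev 1) \<union> layer p lev 2"
    using assms unfolding layer_def by force
  moreover have "layer p lev 0 \<inter> layer p lev 1 = {}"
    and "(layer p lev 0 \<union> layer p lev 1) \<inter> layer p lev 2 = {}"
    unfolding layer_def by auto
  ultimately show ?thesis
    using card_Un_disjoint finite_layer by (metis card_lessThan finite_UnI)
qed

definition layered_arcs :: "nat \<Rightarrow> nat \<Rightarrow> nat \<Rightarrow> nat" where
  "layered_arcs c0 c1 c2 = (if c1 = 0 then c0 * c2 else c1 * (c0 + c2))"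

lemma hasse_arcs_layered_order:
  assumes le2: "\<forall>x<p. lev x \<le> 2"
  shows "hasse_arcs (layered_order p lev) =
    (if layer p lev 1 = {} then layer p lev 0 \<times> layer p lev 2
     else layer p lev 0 \<times> layer p lev 1 \<union> layer p lev 1 \<times> layer p lev 2)"
proof -
  have arcs: "hasse_arcs (layered_order p lev) = {(x, y). x < p \<and> y < p \<and> lev x < lev y \<and>
      \<not> (\<exists>w<p. lev x < lev w \<and> lev w < lev y)}"
    unfolding hasse_arcs_def layered_order_def by auto
  show ?thesis
  proof (cases "layer p lev 1 = {}")
    case True
    then have no1: "\<And>w. w < p \<Longrightarrow> lev w \<noteq> 1" unfolding layer_def by blast
    have "lev x < lev y \<and> \<not> (\<exists>w<p. lev x < lev w \<and> lev w < lev y) \<longleftrightarrow> lev x = 0 \<and> lev y = 2"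
      if "x < p" "y < p" for x y
    proof -
      have "lev x \<le> 2" "lev y \<le> 2" "lev x \<noteq> 1" "lev y \<noteq> 1" using le2 no1 that by auto
      moreover have "\<not> (\<exists>w<p. 0 < lev w \<and> lev w < 2)"
        using no1 by (metis One_nat_def less_2_cases_iff not_gr0)
      ultimately show ?thesis by auto
    qed
    then show ?thesis using True unfolding arcs layer_def by auto
  next
    case False
    then obtain w1 where w1: "w1 < p" "lev w1 = 1" unfolding layer_def by blast
    have "lev x < lev y \<and> \<not> (\<exists>w<p. lev x < lev w \<and> lev w < lev y) \<longleftrightarrow>
        (lev x = 0 \<and> lev y = 1) \<or> (lev x = 1 \<and> lev y = 2)"
      if "x < p" "y < p" for x y
    proof
      assume h: "lev x < lev y \<and> \<not> (\<exists>w<p. lev x < lev w \<and> lev w < lev y)"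
      then have "\<not> (lev x < lev w1 \<and> lev w1 < lev y)" using w1(1) by blast
      moreover have "lev y \<le> 2" using le2 that(2) by blast
      ultimately show "(lev x = 0 \<and> lev y = 1) \<or> (lev x = 1 \<and> lev y = 2)"
        using h w1(2) by arith
    qed auto
    then show ?thesis using False unfolding arcs layer_def by auto
  qed
qed

lemma card_hasse_arcs_layered_order:
  assumes "\<forall>x<p. lev x \<le> 2"
  shows "card (hasse_arcs (layered_order p lev)) =
    layered_arcs (card (layer p lev 0)) (card (layer p lev 1)) (card (layer p lev 2))"
proof (cases "layer p lev 1 = {}")
  case False
  have "layer p lev 0 \<times> layer p lev 1 \<inter> layer p lev 1 \<times> layer p lev 2 = {}"
    unfolding layer_def by auto
  then have "card (layer p lev 0 \<times> layer p lev 1 \<union> layer p lev 1 \<times> layer p lev 2) =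
      card (layer p lev 0) * card (layer p lev 1) + card (layer p lev 1) * card (layer p lev 2)"
    by (simp add: card_Un_disjoint finite_layer card_cartesian_product del: One_nat_def)
  then show ?thesis
    using False hasse_arcs_layered_order[OF assms] finite_layer
    by (simp add: layered_arcs_def algebra_simps)
qed (simp add: hasse_arcs_layered_order[OF assms] layered_arcs_def card_cartesian_product)

lemma layered_order_iso:
  assumes same_card: "\<And>k. card (layer p lev k) = card (layer p lev' k)"
  shows "poset_iso p (layered_order p lev) (layered_order p lev')"
proof -
  have "\<forall>k. \<exists>h. bij_betw h (layer p lev k) (layer p lev' k)"
    using finite_same_card_bij[OF finite_layer finite_layer same_card] by blast
  from choice[OF this] obtain g where g: "\<forall>k. bij_betw (g k) (layer p lev k) (layer p lev' k)" ..
  define f where "f x = g (lev x) x" for x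
  have f_layer: "f x < p \<and> lev' (f x) = lev x" if "x < p" for x
  proof -
    have "x \<in> layer p lev (lev x)" using that unfolding layer_def by simp
    then have "f x \<in> layer p lev' (lev x)" using bij_betwE g unfolding f_def by blast
    then show ?thesis unfolding layer_def by simp
  qed
  have inj: "inj_on f {..<p}"
  proof (rule inj_onI)
    fix x y assume xy: "x \<in> {..<p}" "y \<in> {..<p}" "f x = f y"
    then have "lev x = lev y" using f_layer by (metis lessThan_iff)
    then have "x \<in> layer p lev (lev x)" "y \<in> layer p lev (lev x)"
      using xy(1,2) unfolding layer_def by auto
    then show "x = y"
      using xy(3) \<open>lev x = lev y\<close> bij_betw_imp_inj_on[OF g[rule_format, of "lev x"]]
      unfolding f_def inj_on_def by simp
  qed
  moreover have "f ` {..<p} \<subseteq> {..<p}" using f_layer by auto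
  ultimately have "bij_betw f {..<p} {..<p}"
    by (simp add: bij_betw_def endo_inj_surj)
  moreover have "(x, y) \<in> layered_order p lev \<longleftrightarrow> (f x, f y) \<in> layered_order p lev'"
    if "x < p" "y < p" for x y
  proof -
    have "x = y \<longleftrightarrow> f x = f y" using inj_onD[OF inj] that by blast
    then show ?thesis using that f_layer unfolding layered_order_def by auto
  qed
  ultimately show ?thesis unfolding poset_iso_def by blast
qed

section \<open>Posets with a complete bipartite Hasse graph\<close>

definition min_max_level :: "nat \<Rightarrow> (nat \<times> nat) set \<Rightarrow> nat \<Rightarrow> nat" where
  "min_max_level p R x =
    (if x \<in> minimals p R then 0 else if x \<in> maximals p R then 2 else 1)"

locale bipartite_hasse =
  fixes p :: nat and R :: "(nat \<times> nat) set" and P Q :: "nat set"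
  assumes poset: "is_poset p R"
    and disjoint: "P \<inter> Q = {}" and covering: "P \<union> Q = {..<p}"
    and hasse_graph_eq: "hasse_graph R = P \<times> Q \<union> Q \<times> P"
begin

lemma in_Q_iff: "x < p \<Longrightarrow> x \<in> Q \<longleftrightarrow> x \<notin> P"
  using disjoint covering by blast

lemma adjacent_iff:
  assumes "x < p" "y < p"
  shows "(x, y) \<in> hasse_arcs R \<or> (y, x) \<in> hasse_arcs R \<longleftrightarrow> (x \<in> P \<longleftrightarrow> y \<in> Q)"
proof -
  have "(x, y) \<in> hasse_arcs R \<or> (y, x) \<in> hasse_arcs R \<longleftrightarrow> (x, y) \<in> P \<times> Q \<union> Q \<times> P"
    using hasse_graph_eq unfolding hasse_graph_def by blast
  then show ?thesis using in_Q_iff assms by auto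
qed

lemma arc_crosses:
  assumes "(x, y) \<in> hasse_arcs R"
  shows "x < p" "y < p" "x \<in> P \<longleftrightarrow> y \<in> Q"
proof -
  show "x < p" "y < p" using assms hasse_arcs_subset[OF poset] by blast+
  then show "x \<in> P \<longleftrightarrow> y \<in> Q" using assms adjacent_iff by blast
qed

text \<open>Along a chain of three covers the parts alternate, so its ends would be adjacent.\<close>

lemma no_cover_chain:
  assumes ab: "(a, b) \<in> hasse_arcs R" and bc: "(b, c) \<in> hasse_arcs R"
    and cd: "(c, d) \<in> hasse_arcs R"
  shows False
proof -
  have "a \<in> P \<longleftrightarrow> d \<in> Q"
    using arc_crosses[OF ab] arc_crosses[OF bc] arc_crosses[OF cd] in_Q_iff by blast
  then have adjacent: "(a, d) \<in> hasse_arcs R \<or> (d, a) \<in> hasse_arcs R"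
    using adjacent_iff arc_crosses(1)[OF ab] arc_crosses(2)[OF cd] by blast
  have "(a, b) \<in> R" "a \<noteq> b" "(b, c) \<in> R" "b \<noteq> c" "(c, d) \<in> R"
    using hasse_arcsD[OF ab] hasse_arcsD[OF bc] hasse_arcsD[OF cd] by auto
  then have bd: "(b, d) \<in> R" "b \<noteq> d" and ad: "(a, d) \<in> R"
    using is_poset_trans[OF poset] is_poset_antisym[OF poset] by blast+
  show False
    using adjacent
  proof
    assume "(a, d) \<in> hasse_arcs R"
    then show False using hasse_arcs_no_between \<open>(a, b) \<in> R\<close> \<open>a \<noteq> b\<close> bd by blast
  next
    assume "(d, a) \<in> hasse_arcs R"
    then show False using hasse_arcsD is_poset_antisym[OF poset ad] bd(2) \<open>(a, b) \<in> R\<close>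
      \<open>(b, d) \<in> R\<close> by (metis is_poset_antisym[OF poset] is_poset_trans[OF poset])
  qed
qed

lemma converse: "bipartite_hasse p (R\<inverse>) P Q"
proof
  show "hasse_graph (R\<inverse>) = P \<times> Q \<union> Q \<times> P"
    using hasse_graph_eq unfolding hasse_graph_def hasse_arcs_converse by blast
qed (use poset is_poset_converse disjoint covering in auto)

lemma minimal_less:
  assumes x: "x \<in> minimals p R" and y: "y < p" "y \<notin> minimals p R"
  shows "(x, y) \<in> R"
proof -
  have no_arc_into_x: "(w, x) \<notin> hasse_arcs R" for w
    using x hasse_arcsD unfolding minimals_def by blast
  have x_p: "x < p" using x unfolding minimals_def by blast
  show ?thesis
  proof (cases "x \<in> P \<longleftrightarrow> y \<in> Q")
    case True
    then show ?thesis using adjacent_iff[OF x_p y(1)] no_arc_into_x hasse_arcsD by blast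
  next
    case False
    obtain y' where "(y', y) \<in> R" "y' \<noteq> y" using y unfolding minimals_def by blast
    then obtain u where u: "(u, y) \<in> hasse_arcs R"
      using exists_cover_below[OF poset] by metis
    then have "x \<in> P \<longleftrightarrow> u \<in> Q"
      using False arc_crosses[OF u] x_p disjoint covering by blast
    then have "(x, u) \<in> hasse_arcs R"
      using adjacent_iff[OF x_p arc_crosses(1)[OF u]] no_arc_into_x by blast
    then show ?thesis using u hasse_arcsD is_poset_trans[OF poset] by blast
  qed
qed

lemma maximal_greater:
  assumes "x \<in> maximals p R" "y < p" "y \<notin> maximals p R"
  shows "(y, x) \<in> R"
proof -
  interpret converse: bipartite_hasse p "R\<inverse>" P Q by (rule converse)
  show ?thesis using converse.minimal_less assms unfolding maximals_def by blast
qed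

lemma less_imp_level_less:
  assumes xy: "(x, y) \<in> R" "x \<noteq> y"
  shows "min_max_level p R x < min_max_level p R y"
proof -
  have x_p: "x < p" and y_p: "y < p" using xy(1) is_poset_subset[OF poset] by auto
  have x_not_max: "x \<notin> maximals p R" using xy unfolding maximals_iff by blast
  have y_not_min: "y \<notin> minimals p R" using xy unfolding minimals_def by blast
  have "y \<in> maximals p R" if x_not_min: "x \<notin> minimals p R"
  proof (rule ccontr)
    assume "y \<notin> maximals p R"
    then obtain y' where yy': "(y, y') \<in> R" "y' \<noteq> y" using y_p unfolding maximals_iff by blast
    obtain x' where "(x', x) \<in> R" "x' \<noteq> x" using x_not_min x_p unfolding minimals_def by blast
    then obtain x0 where x0: "(x0, x) \<in> hasse_arcs R" using exists_cover_below[OF poset] by metis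
    obtain z where z: "(x, z) \<in> hasse_arcs R" "(z, y) \<in> R"
      using exists_cover_above[OF poset xy] by metis
    have "(z, y') \<in> R" using is_poset_trans[OF poset z(2) yy'(1)] .
    moreover have "z \<noteq> y'" using is_poset_antisym[OF poset z(2)] yy' by blast
    ultimately obtain z' where "(z, z') \<in> hasse_arcs R" using exists_cover_above[OF poset] by metis
    then show False using no_cover_chain x0 z(1) by blast
  qed
  then show ?thesis using x_not_max y_not_min unfolding min_max_level_def by auto
qed

lemma level_less_imp_less:
  assumes "x < p" "y < p" "min_max_level p R x < min_max_level p R y"
  shows "(x, y) \<in> R"
proof (cases "x \<in> minimals p R")
  case True
  then show ?thesis using minimal_less assms unfolding min_max_level_def by (auto split: if_splits)
next
  case False
  then show ?thesis using maximal_greater assms unfolding min_max_level_def by (auto split: if_splits)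
qed

lemma eq_layered_order: "R = layered_order p (min_max_level p R)"
proof -
  have "(x, y) \<in> R \<longleftrightarrow> x = y \<or> min_max_level p R x < min_max_level p R y"
    if "x < p" "y < p" for x y
    using that is_poset_refl[OF poset] less_imp_level_less level_less_imp_less by blast
  then show ?thesis using is_poset_subset[OF poset] unfolding layered_order_def by blast
qed

lemma maximal_not_minimal:
  assumes "P \<noteq> {}" "Q \<noteq> {}" "x \<in> maximals p R"
  shows "x \<notin> minimals p R"
proof -
  obtain y where "y < p" "x \<in> P \<longleftrightarrow> y \<in> Q"
  proof (cases "x \<in> P")
    case True
    then show thesis using that assms(2) covering by blast
  next
    case False
    then show thesis using that assms(1) covering in_Q_iff by blast
  qed
  moreover have "x < p" using assms(3) unfolding maximals_iff by blast
  ultimately have "(x, y) \<in> hasse_arcs R \<or> (y, x) \<in> hasse_arcs R" using adjacent_iff by blast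
  then show ?thesis using assms(3) hasse_arcsD unfolding minimals_def maximals_iff by blast
qed

end

lemma extremal_poset_layered:
  assumes R: "is_poset p R" and p2: "2 \<le> p" and extremal: "card (hasse_arcs R) = a_max p"
  obtains lev where "\<forall>x<p. lev x \<le> 2" "R = layered_order p lev"
    "layer p lev 0 \<noteq> {}" "layer p lev 2 \<noteq> {}"
proof -
  have "card (hasse_graph R) = 2 * a_max (card {..<p})"
    using card_hasse_graph[OF R] extremal by simp
  then obtain P Q where PQ: "P \<inter> Q = {}" "P \<union> Q = {..<p}" "hasse_graph R = P \<times> Q \<union> Q \<times> P"
    using mantel_extremal[OF _ hasse_graph_subset[OF R] sym_hasse_graph triangle_free_hasse_graph[OF R]]
    by blast
  interpret bipartite_hasse p R P Q using R PQ by unfold_locales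
  have "1 \<le> a_max p" using mult_le_a_max[of 1 "p - 1"] p2 by simp
  then have "hasse_graph R \<noteq> {}" using card_hasse_graph[OF R] extremal by auto
  then have PQ_ne: "P \<noteq> {}" "Q \<noteq> {}" using PQ(3) by auto
  define lev where "lev = min_max_level p R"
  have "minimals p R \<noteq> {}" using minimals_nonempty[OF R] p2 by simp
  then have "layer p lev 0 \<noteq> {}" unfolding layer_def lev_def min_max_level_def minimals_def by auto
  moreover have "layer p lev 2 \<noteq> {}"
  proof -
    obtain m where "m \<in> maximals p R"
      using minimals_nonempty[OF is_poset_converse[OF R]] p2 unfolding maximals_def by auto
    moreover have "m < p" using \<open>m \<in> maximals p R\<close> maximals_iff by blast
    moreover have "m \<notin> minimals p R" using maximal_not_minimal[OF PQ_ne] calculation(1) .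
    ultimately have "m \<in> layer p lev 2"
      using \<open>m < p\<close> \<open>m \<in> maximals p R\<close> unfolding layer_def lev_def min_max_level_def by simp
    then show ?thesis by blast
  qed
  moreover have "\<forall>x<p. lev x \<le> 2" unfolding lev_def min_max_level_def by simp
  moreover have "R = layered_order p lev" unfolding lev_def by (rule eq_layered_order)
  ultimately show thesis by (intro that)
qed

section \<open>Counting the extremal posets\<close>

definition min_max_counts :: "nat \<Rightarrow> (nat \<times> nat) set \<Rightarrow> nat \<times> nat" where
  "min_max_counts p R = (card (minimals p R), card (maximals p R))"

lemma poset_iso_converse: "poset_iso p R S \<Longrightarrow> poset_iso p (R\<inverse>) (S\<inverse>)"
  unfolding poset_iso_def by auto

lemma minimals_iff:
  assumes "is_poset p R"
  shows "x \<in> minimals p R \<longleftrightarrow> x < p \<and> (\<forall>y<p. (y, x) \<in> R \<longrightarrow> y = x)"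
  using is_poset_subset[OF assms] unfolding minimals_def by blast

lemma minimals_iso_image:
  assumes R: "is_poset p R" and S: "is_poset p S" and bij: "bij_betw f {..<p} {..<p}"
    and hom: "\<And>x y. x < p \<Longrightarrow> y < p \<Longrightarrow> (x, y) \<in> R \<longleftrightarrow> (f x, f y) \<in> S"
  shows "f ` minimals p R = minimals p S"
proof -
  have inj: "inj_on f {..<p}" using bij by (rule bij_betw_imp_inj_on)
  have f_lt: "f x < p" if "x < p" for x using bij_betwE[OF bij] that by blast
  have f_onto: "\<exists>x<p. z = f x" if "z < p" for z
  proof -
    have "z \<in> f ` {..<p}" using bij_betw_imp_surj_on[OF bij] that by simp
    then show ?thesis by auto
  qed
  have minimal_iff: "x \<in> minimals p R \<longleftrightarrow> f x \<in> minimals p S" if x: "x < p" for x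
  proof
    assume min: "x \<in> minimals p R"
    have "z = f x" if "z < p" "(z, f x) \<in> S" for z
    proof -
      obtain y where y: "y < p" "z = f y" using f_onto[OF \<open>z < p\<close>] by blast
      then have "(y, x) \<in> R" using hom[OF y(1) x] that(2) by simp
      then show ?thesis using min y(2) unfolding minimals_def by blast
    qed
    then show "f x \<in> minimals p S" unfolding minimals_iff[OF S] using f_lt[OF x] by blast
  next
    assume min: "f x \<in> minimals p S"
    have "y = x" if "y < p" "(y, x) \<in> R" for y
    proof -
      have "(f y, f x) \<in> S" using hom[OF that(1) x] that(2) by simp
      then have "f y = f x" using min unfolding minimals_def by blast
      then show ?thesis using inj_onD[OF inj] that(1) x by simp
    qed
    then show "x \<in> minimals p R" unfolding minimals_iff[OF R] using x by blast
  qed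
  have min_lt: "x < p" if "x \<in> minimals p T" for x T using that unfolding minimals_def by blast
  show ?thesis
  proof (intro equalityI subsetI)
    fix z assume "z \<in> f ` minimals p R"
    then obtain x where "x \<in> minimals p R" "z = f x" by blast
    then show "z \<in> minimals p S" using minimal_iff min_lt by blast
  next
    fix z assume z: "z \<in> minimals p S"
    then obtain x where "x < p" "z = f x" using f_onto min_lt by blast
    then show "z \<in> f ` minimals p R" using minimal_iff z by blast
  qed
qed

lemma card_minimals_iso:
  assumes R: "is_poset p R" and S: "is_poset p S" and iso: "poset_iso p R S"
  shows "card (minimals p R) = card (minimals p S)"
proof -
  obtain f where bij: "bij_betw f {..<p} {..<p}"
    and hom: "\<forall>x\<in>{..<p}. \<forall>y\<in>{..<p}. (x, y) \<in> R \<longleftrightarrow> (f x, f y) \<in> S"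
    using iso unfolding poset_iso_def by blast
  have "minimals p R \<subseteq> {..<p}" unfolding minimals_def by auto
  then have "inj_on f (minimals p R)" by (rule inj_on_subset[OF bij_betw_imp_inj_on[OF bij]])
  moreover have "f ` minimals p R = minimals p S"
    using minimals_iso_image[OF R S bij] hom by simp
  ultimately show ?thesis using card_image by metis
qed

lemma min_max_counts_iso:
  assumes "is_poset p R" "is_poset p S" "poset_iso p R S"
  shows "min_max_counts p R = min_max_counts p S"
  using card_minimals_iso[OF assms] assms
    card_minimals_iso[OF is_poset_converse is_poset_converse poset_iso_converse]
  unfolding min_max_counts_def maximals_def by simp

lemma min_max_counts_layered_order:
  assumes "\<forall>x<p. lev x \<le> 2" "layer p lev 0 \<noteq> {}" "layer p lev 2 \<noteq> {}"
  shows "min_max_counts p (layered_order p lev) = (card (layer p lev 0), card (layer p lev 2))"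
proof -
  have "minimals p (layered_order p lev) = layer p lev 0"
    using assms(2) unfolding minimals_layered_order layer_def by fastforce
  moreover have "maximals p (layered_order p lev) = layer p lev 2"
    using assms(1,3) unfolding maximals_layered_order layer_def by fastforce
  ultimately show ?thesis unfolding min_max_counts_def by simp
qed

lemma card_quotient_kernel:
  assumes "\<And>x y. x \<in> A \<Longrightarrow> y \<in> A \<Longrightarrow> r x y \<longleftrightarrow> \<phi> x = \<phi> y"
  shows "card (A // {(x, y). x \<in> A \<and> y \<in> A \<and> r x y}) = card (\<phi> ` A)"
proof -
  define fibre where "fibre t = {x \<in> A. \<phi> x = t}" for t
  have "{(x, y). x \<in> A \<and> y \<in> A \<and> r x y} `` {x} = fibre (\<phi> x)" if "x \<in> A" for x
    using assms that unfolding fibre_def by auto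
  then have "A // {(x, y). x \<in> A \<and> y \<in> A \<and> r x y} = fibre ` \<phi> ` A"
    unfolding quotient_def by auto
  moreover have "inj_on fibre (\<phi> ` A)"
    unfolding fibre_def by (rule inj_onI) blast
  ultimately show ?thesis by (simp add: card_image)
qed

definition posets_with_arcs :: "nat \<Rightarrow> nat \<Rightarrow> (nat \<times> nat) set set" where
  "posets_with_arcs p a = {R. is_poset p R \<and> card (hasse_arcs R) = a}"

lemma extremal_iso_iff:
  assumes p2: "2 \<le> p"
    and R: "R \<in> posets_with_arcs p (a_max p)" and S: "S \<in> posets_with_arcs p (a_max p)"
  shows "poset_iso p R S \<longleftrightarrow> min_max_counts p R = min_max_counts p S"
proof
  assume "poset_iso p R S"
  then show "min_max_counts p R = min_max_counts p S"
    using min_max_counts_iso R S unfolding posets_with_arcs_def by blast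
next
  assume counts: "min_max_counts p R = min_max_counts p S"
  obtain lev where lev: "\<forall>x<p. lev x \<le> 2" "R = layered_order p lev"
    "layer p lev 0 \<noteq> {}" "layer p lev 2 \<noteq> {}"
    using extremal_poset_layered[OF _ p2] R unfolding posets_with_arcs_def by blast
  obtain lev' where lev': "\<forall>x<p. lev' x \<le> 2" "S = layered_order p lev'"
    "layer p lev' 0 \<noteq> {}" "layer p lev' 2 \<noteq> {}"
    using extremal_poset_layered[OF _ p2] S unfolding posets_with_arcs_def by blast
  have "card (layer p lev k) = card (layer p lev' k)" if "k \<le> 2" for k
    using counts min_max_counts_layered_order[OF lev(1,3,4)] min_max_counts_layered_order[OF lev'(1,3,4)]
      card_layers[OF lev(1)] card_layers[OF lev'(1)] lev(2) lev'(2) that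
    by (auto simp add: le_Suc_eq numeral_2_eq_2)
  moreover have "layer p lev k = {} \<and> layer p lev' k = {}" if "2 < k" for k
    using lev(1) lev'(1) that unfolding layer_def by fastforce
  ultimately have "card (layer p lev k) = card (layer p lev' k)" for k
    by (metis not_le)
  then show "poset_iso p R S" using layered_order_iso lev(2) lev'(2) by simp
qed

definition extremal_profiles :: "nat \<Rightarrow> (nat \<times> nat) set" where
  "extremal_profiles p = {(c0, c2). 1 \<le> c0 \<and> 1 \<le> c2 \<and> c0 + c2 \<le> p \<and>
     layered_arcs c0 (p - c0 - c2) c2 = a_max p}"

lemma exists_levels_with_layer_cards:
  assumes "c0 + c1 + c2 = p"
  obtains lev where "\<forall>x<p. lev x \<le> 2" "card (layer p lev 0) = c0"
    "card (layer p lev 1) = c1" "card (layer p lev 2) = c2"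
proof
  define lev where "lev x = (if x < c0 then 0 else if x < c0 + c1 then 1 else 2 :: nat)" for x
  show "\<forall>x<p. lev x \<le> 2" unfolding lev_def by simp
  have "layer p lev 0 = {..<c0}" "layer p lev 1 = {c0..<c0 + c1}" "layer p lev 2 = {c0 + c1..<p}"
    using assms unfolding layer_def lev_def by auto
  then show "card (layer p lev 0) = c0" "card (layer p lev 1) = c1" "card (layer p lev 2) = c2"
    using assms by auto
qed

lemma min_max_counts_extremal:
  assumes p2: "2 \<le> p"
  shows "min_max_counts p ` posets_with_arcs p (a_max p) = extremal_profiles p"
proof
  show "min_max_counts p ` posets_with_arcs p (a_max p) \<subseteq> extremal_profiles p"
  proof
    fix t assume "t \<in> min_max_counts p ` posets_with_arcs p (a_max p)"
    then obtain R where R: "R \<in> posets_with_arcs p (a_max p)" "t = min_max_counts p R" by blast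
    then obtain lev where lev: "\<forall>x<p. lev x \<le> 2" "R = layered_order p lev"
      "layer p lev 0 \<noteq> {}" "layer p lev 2 \<noteq> {}"
      using extremal_poset_layered[OF _ p2] unfolding posets_with_arcs_def by blast
    have "t = (card (layer p lev 0), card (layer p lev 2))"
      using R(2) lev min_max_counts_layered_order by simp
    moreover have "1 \<le> card (layer p lev 0)" "1 \<le> card (layer p lev 2)"
      using lev(3,4) finite_layer by (simp_all add: Suc_leI card_gt_0_iff)
    moreover have "layered_arcs (card (layer p lev 0)) (card (layer p lev 1))
        (card (layer p lev 2)) = a_max p"
      using card_hasse_arcs_layered_order[OF lev(1)] R(1) lev(2)
      unfolding posets_with_arcs_def by simp
    moreover have "p - card (layer p lev 0) - card (layer p lev 2) = card (layer p lev 1)"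
      using card_layers[OF lev(1)] by linarith
    ultimately show "t \<in> extremal_profiles p"
      using card_layers[OF lev(1)] unfolding extremal_profiles_def by auto
  qed
  show "extremal_profiles p \<subseteq> min_max_counts p ` posets_with_arcs p (a_max p)"
  proof
    fix t assume "t \<in> extremal_profiles p"
    then obtain c0 c2 where t: "t = (c0, c2)" "1 \<le> c0" "1 \<le> c2" "c0 + c2 \<le> p"
      "layered_arcs c0 (p - c0 - c2) c2 = a_max p"
      unfolding extremal_profiles_def by auto
    obtain lev where lev: "\<forall>x<p. lev x \<le> 2" "card (layer p lev 0) = c0"
      "card (layer p lev 1) = p - c0 - c2" "card (layer p lev 2) = c2"
      using exists_levels_with_layer_cards[of c0 "p - c0 - c2" c2 p] t(4) by auto
    then have "layer p lev 0 \<noteq> {}" "layer p lev 2 \<noteq> {}" using t by auto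
    then have "min_max_counts p (layered_order p lev) = t"
      using min_max_counts_layered_order[OF lev(1)] lev t(1) by simp
    moreover have "layered_order p lev \<in> posets_with_arcs p (a_max p)"
      using is_poset_layered_order card_hasse_arcs_layered_order[OF lev(1)] lev t(5)
      unfolding posets_with_arcs_def by simp
    ultimately show "t \<in> min_max_counts p ` posets_with_arcs p (a_max p)" by force
  qed
qed

lemma a_max_eq_mult: "a_max p = p div 2 * (p - p div 2)"
proof (cases "even p")
  case True
  then obtain h where "p = 2 * h" by blast
  then show ?thesis unfolding a_max_def by (simp add: power2_eq_square)
next
  case False
  then obtain h where p: "p = 2 * h + 1" using oddE by blast
  have "p^2 = 4 * (h * (h + 1)) + 1" unfolding p by (simp add: power2_eq_square algebra_simps)
  then show ?thesis unfolding a_max_def p by simp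
qed

lemma mult_diff_eq_iff:
  fixes k h p :: nat
  assumes "k \<le> p" "h \<le> p"
  shows "k * (p - k) = h * (p - h) \<longleftrightarrow> k = h \<or> k = p - h"
proof -
  have factor: "int (k * (p - k)) - int (h * (p - h)) = (int k - int h) * (int p - int k - int h)"
    using assms by (simp add: of_nat_diff algebra_simps)
  have "k * (p - k) = h * (p - h) \<longleftrightarrow> int (k * (p - k)) = int (h * (p - h))"
    by (rule of_nat_eq_iff[symmetric])
  also have "\<dots> \<longleftrightarrow> (int k - int h) * (int p - int k - int h) = 0"
    using factor by linarith
  also have "\<dots> \<longleftrightarrow> k = h \<or> k = p - h"
    using assms by auto
  finally show ?thesis .
qed

definition positive_pairs :: "nat \<Rightarrow> (nat \<times> nat) set" where
  "positive_pairs s = {(a, b). 1 \<le> a \<and> 1 \<le> b \<and> a + b = s}"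

lemma card_positive_pairs: "card (positive_pairs s) = s - 1"
proof -
  have "positive_pairs s = (\<lambda>a. (a, s - a)) ` {1..<s}"
    unfolding positive_pairs_def by (auto simp add: image_iff)
  moreover have "inj_on (\<lambda>a. (a, s - a)) {1..<s}" by (auto simp add: inj_on_def)
  ultimately show ?thesis by (simp add: card_image)
qed

lemma finite_positive_pairs: "finite (positive_pairs s)"
  by (rule finite_subset[of _ "{..s} \<times> {..s}"]) (auto simp add: positive_pairs_def)

lemma extremal_profiles_eq:
  assumes "2 \<le> p"
  defines "h \<equiv> p div 2"
  shows "extremal_profiles p = {(h, p - h), (p - h, h)} \<union> positive_pairs h \<union> positive_pairs (p - h)"
proof -
  have h: "1 \<le> h" "h < p" "p - h < p" using assms(1) unfolding h_def by auto
  have a_max: "a_max p = h * (p - h)" unfolding h_def by (rule a_max_eq_mult)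
  have "(c0, c2) \<in> extremal_profiles p \<longleftrightarrow>
      (c0, c2) \<in> {(h, p - h), (p - h, h)} \<union> positive_pairs h \<union> positive_pairs (p - h)" for c0 c2
  proof (cases "c0 + c2 = p")
    case True
    then have c2: "c2 = p - c0" by simp
    then have "layered_arcs c0 (p - c0 - c2) c2 = c0 * (p - c0)" unfolding layered_arcs_def by simp
    moreover have "(c0, c2) \<notin> positive_pairs h \<union> positive_pairs (p - h)"
      using True h unfolding positive_pairs_def by auto
    moreover have "c0 \<le> p" using True by simp
    ultimately show ?thesis
      using c2 h mult_diff_eq_iff[of c0 p h] unfolding extremal_profiles_def a_max by auto
  next
    case False
    show ?thesis
    proof (cases "c0 + c2 < p")
      case True
      define c1 where "c1 = p - c0 - c2"
      have "layered_arcs c0 (p - c0 - c2) c2 = c1 * (p - c1)"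
        using True unfolding layered_arcs_def c1_def by (simp add: algebra_simps)
      then have "(c0, c2) \<in> extremal_profiles p \<longleftrightarrow> 1 \<le> c0 \<and> 1 \<le> c2 \<and> (c1 = h \<or> c1 = p - h)"
        using True h mult_diff_eq_iff[of c1 p h] unfolding extremal_profiles_def a_max c1_def by auto
      moreover have "(c0, c2) \<in> {(h, p - h), (p - h, h)} \<union> positive_pairs h \<union> positive_pairs (p - h)
          \<longleftrightarrow> 1 \<le> c0 \<and> 1 \<le> c2 \<and> (c0 + c2 = h \<or> c0 + c2 = p - h)"
        using True h unfolding positive_pairs_def by auto
      moreover have "c1 = h \<longleftrightarrow> c0 + c2 = p - h" "c1 = p - h \<longleftrightarrow> c0 + c2 = h"
        using True h unfolding c1_def by arith+
      ultimately show ?thesis by blast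
    next
      case False
      then have "c0 + c2 > p" using \<open>c0 + c2 \<noteq> p\<close> by simp
      then show ?thesis using h unfolding extremal_profiles_def positive_pairs_def by auto
    qed
  qed
  then show ?thesis by auto
qed

lemma card_extremal_profiles:
  assumes "2 \<le> p"
  shows "card (extremal_profiles p) = (if odd p then p else p div 2)"
proof (cases "even p")
  case True
  then obtain h where p: "p = 2 * h" and h: "p div 2 = h" "p - h = h" by auto
  have "(h, h) \<notin> positive_pairs h" using assms p unfolding positive_pairs_def by auto
  then have "card (extremal_profiles p) = 1 + (h - 1)"
    using extremal_profiles_eq[OF assms] h card_positive_pairs finite_positive_pairs by simp
  then show ?thesis using True assms p by simp
next
  case False
  then obtain h where p: "p = 2 * h + 1" and h: "p div 2 = h" "p - h = h + 1" using oddE by fastforce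
  have "{(h, h + 1), (h + 1, h)} \<inter> (positive_pairs h \<union> positive_pairs (h + 1)) = {}"
    and "positive_pairs h \<inter> positive_pairs (h + 1) = {}"
    using assms p unfolding positive_pairs_def by auto
  then have "card (extremal_profiles p) = 2 + ((h - 1) + h)"
    using extremal_profiles_eq[OF assms] h card_positive_pairs finite_positive_pairs
    by (simp add: card_Un_disjoint Un_assoc)
  then show ?thesis using False assms p by simp
qed

lemma H_a_max:
  assumes "2 \<le> p"
  shows "H p (a_max p) = (if odd p then p else p div 2)"
proof -
  have "H p (a_max p) = card (min_max_counts p ` posets_with_arcs p (a_max p))"
    unfolding H_def num_iso_classes_def posets_with_arcs_def[symmetric]
    using card_quotient_kernel extremal_iso_iff[OF assms] by blast
  then show ?thesis using min_max_counts_extremal[OF assms] card_extremal_profiles[OF assms] by simp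
qed

lemma H_1_0: "H 1 0 = 1"
proof -
  have poset_1: "is_poset 1 R \<longleftrightarrow> R = {(0, 0)}" for R
  proof
    assume R: "is_poset 1 R"
    then have "R \<subseteq> {(0, 0)}" using is_poset_subset[OF R] by auto
    moreover have "(0, 0) \<in> R" using is_poset_refl[OF R, of 0] by simp
    ultimately show "R = {(0, 0)}" by blast
  qed (simp add: is_poset_def)
  have "hasse_arcs {(0, 0)} = {}" unfolding hasse_arcs_def by auto
  then have "{R. is_poset 1 R \<and> card (hasse_arcs R) = 0} = {{(0, 0)}}"
    unfolding poset_1 by auto
  then show ?thesis unfolding H_def num_iso_classes_def by (simp add: singleton_quotient)
qed

lemma num_iso_classes_empty: "num_iso_classes p {} = 0"
  unfolding num_iso_classes_def by simp

theorem lemma2: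
  fixes p a :: nat
  assumes "p \<ge> 1"
  shows "(a < p - 1 \<longrightarrow> Hc p a = 0)
    \<and> (a > a_max p \<longrightarrow> H p a = 0)
    \<and> H p (a_max p) = (if odd p then p else p div 2)
    \<and> (a_max (p - 1) < a \<and> a \<le> a_max p \<longrightarrow> H p a = Hc p a)"
proof (intro conjI impI)
  assume "a < p - 1"
  then have "{R. is_poset p R \<and> card (hasse_arcs R) = a \<and> hasse_connected p R} = {}"
    using card_hasse_arcs_ge_if_connected by fastforce
  then show "Hc p a = 0" unfolding Hc_def by (metis num_iso_classes_empty)
next
  assume "a > a_max p"
  then have "{R. is_poset p R \<and> card (hasse_arcs R) = a} = {}"
    using card_hasse_arcs_le_a_max by fastforce
  then show "H p a = 0" unfolding H_def by (metis num_iso_classes_empty)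
next
  show "H p (a_max p) = (if odd p then p else p div 2)"
    using H_a_max H_1_0 assms by (cases "p = 1") (simp_all add: a_max_def)
next
  assume "a_max (p - 1) < a \<and> a \<le> a_max p"
  then have "{R. is_poset p R \<and> card (hasse_arcs R) = a} =
      {R. is_poset p R \<and> card (hasse_arcs R) = a \<and> hasse_connected p R}"
    using card_hasse_arcs_le_if_disconnected by fastforce
  then show "H p a = Hc p a" unfolding H_def Hc_def by simp
qed

end
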